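(* Let $\alpha>0$, $x\in\mathbb{R}^+$ and $r>0$. Let $B_\delta(x,r)=\{y\in\mathbb{R}^+:\delta(x,y)<r\}$. All integrals below are in $y$, with integrand a function of $\delta(x,y)$. (a) $B_\delta(x,r)$ is the largest dyadic interval in $\mathcal{D}$ that contains $x$ and has measure less than $r$. Denote it by $I(x,r)$. (b) $\displaystyle\int_{B_\delta(x,r)}\frac{dy}{\delta(x,y)^{1-\alpha}}=\frac{1}{2(1-2^{-\alpha})}|I(x,r)|^{\alpha}$. This quantity is comparable to $r^\alpha$, with constants depending only on $\alpha$. (c) $\displaystyle\int_{B_\delta(x,r)}\frac{dy}{\delta(x,y)^{1+\alpha}}=+\infty$. (d) $\displaystyle\int_{\mathbb{R}^+\setminus B_\delta(x,r)}\frac{dy}{\delta(x,y)^{1+\alpha}}=\frac{2^{-\alpha}}{2(1-2^{-\alpha})}|I(x,r)|^{-\alpha}$. This quantity is comparable to $r^{-\alpha}$, with constants depending only on $\alpha$. (e) $\displaystyle\int_{\mathbb{R}^+\setminus B_\delta(x,r)}\frac{dy}{\delta(x,y)^{1-\alpha}}=+\infty$. (f) $\displaystyle\int_{B_\delta(x,r)}\frac{dy}{\delta(x,y)}=\int_{\mathbb{R}^+\setminus B_\delta(x,r)}\frac{dy}{\delta(x,y)}=+\infty$.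
   Context: Let $\mathbb{R}^+=(0,\infty)$. $\mathcal{D}$ is the family of dyadic intervals in $\mathbb{R}^+$, namely the intervals $I^j_k=(k2^{-j},(k+1)2^{-j}]$ with $j\in\mathbb{Z}$ and $k$ a nonnegative integer. The dyadic distance on $\mathbb{R}^+$ is $\delta(x,y)=\inf\{|I|: I\in\mathcal{D},\ x,y\in I\}$. It is a metric and satisfies $|x-y|\le\delta(x,y)$. *)

theory Defs
  imports "HOL-Analysis.Analysis"
begin

definition dyadic_interval :: "int \<Rightarrow> nat \<Rightarrow> real set" where
  "dyadic_interval j k = {real k * 2 powr (- real_of_int j) <.. (real k + 1) * 2 powr (- real_of_int j)}"

definition dyadic_family :: "real set set" where
  "dyadic_family = {dyadic_interval j k | j k. True}"

definition dyadic_dist :: "real \<Rightarrow> real \<Rightarrow> real" where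
  "dyadic_dist x y = Inf {measure lborel I | I. I \<in> dyadic_family \<and> x \<in> I \<and> y \<in> I}"

definition dyadic_ball :: "real \<Rightarrow> real \<Rightarrow> real set" where
  "dyadic_ball x r = {y. 0 < y \<and> dyadic_dist x y < r}"

end

theory Submission
  imports Defs
begin

(* For y different from x, the dyadic distance delta(x, y) is the length 2^-j of the smallest
   dyadic interval containing both points. Hence delta(x, .) equals 2^-j on the annulus
   I_j(x) - I_(j+1)(x) between consecutive dyadic intervals around x, a set of measure 2^-(j+1).
   The ball B(x, r) is the interval I_j0(x) with 2^-j0 < r <= 2^(1-j0), so each integral of
   delta(x, y)^-p is a sum over annuli: a geometric series of ratio 2^(p-1) inside the ball and
   of ratio 2^(1-p) outside it, finite exactly when p < 1, respectively p > 1. *)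

definition dyadic_length :: "int \<Rightarrow> real" where
  "dyadic_length j = 2 powr (- real_of_int j)"

(* For x > 0, the k with x in (k 2^-j, (k+1) 2^-j]. *)
definition dyadic_index :: "real \<Rightarrow> int \<Rightarrow> nat" where
  "dyadic_index x j = nat (\<lceil>x / dyadic_length j\<rceil> - 1)"

definition dyadic_cell :: "real \<Rightarrow> int \<Rightarrow> real set" where
  "dyadic_cell x j = dyadic_interval j (dyadic_index x j)"

definition dyadic_annulus :: "real \<Rightarrow> int \<Rightarrow> real set" where
  "dyadic_annulus x j = dyadic_cell x j - dyadic_cell x (j + 1)"

lemma dyadic_length_pos [simp]: "0 < dyadic_length j"
  by (simp add: dyadic_length_def)

lemma dyadic_length_neq_zero [simp]: "dyadic_length j \<noteq> 0"
  by (simp add: dyadic_length_def)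

lemma dyadic_length_nonneg [simp]: "0 \<le> dyadic_length j"
  by (simp add: dyadic_length_def)

lemma dyadic_length_antimono: "i \<le> j \<Longrightarrow> dyadic_length j \<le> dyadic_length i"
  unfolding dyadic_length_def by (intro powr_mono) auto

lemma dyadic_length_add_nat: "dyadic_length (j + int m) = dyadic_length j / 2 ^ m"
  unfolding dyadic_length_def by (simp add: powr_diff powr_realpow)

lemma dyadic_length_succ: "dyadic_length (j + 1) = dyadic_length j / 2"
  using dyadic_length_add_nat[of j 1] by simp

lemma dyadic_length_diff_nat: "dyadic_length (j - int m) = dyadic_length j * 2 ^ m"
  unfolding dyadic_length_def by (simp add: powr_diff powr_realpow powr_minus field_simps)

lemma exists_dyadic_length_between:
  assumes "0 < r" shows "\<exists>j. dyadic_length j < r \<and> r \<le> 2 * dyadic_length j"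
proof -
  define j where "j = \<lfloor>- log 2 r\<rfloor> + 1"
  have "- real_of_int j < log 2 r" "log 2 r \<le> 1 - real_of_int j"
    unfolding j_def by linarith+
  then have "2 powr (- real_of_int j) < 2 powr (log 2 r)" "2 powr (log 2 r) \<le> 2 powr (1 - real_of_int j)"
    by (auto intro: powr_less_mono powr_mono)
  then show ?thesis
    using assms by (intro exI[of _ j]) (simp add: dyadic_length_def powr_diff powr_minus divide_inverse)
qed

lemma exists_dyadic_length_less: "0 < e \<Longrightarrow> \<exists>j. dyadic_length j < e"
  using exists_dyadic_length_between by blast

lemma dyadic_length_less_iff:
  assumes "dyadic_length i < r" "r \<le> 2 * dyadic_length i"
  shows "dyadic_length j < r \<longleftrightarrow> i \<le> j"
proof
  assume "dyadic_length j < r"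
  show "i \<le> j"
  proof (rule ccontr)
    assume "\<not> i \<le> j"
    then have "dyadic_length (i - int 1) \<le> dyadic_length j"
      by (intro dyadic_length_antimono) simp
    then show False
      using assms \<open>dyadic_length j < r\<close> unfolding dyadic_length_diff_nat by simp
  qed
qed (use assms dyadic_length_antimono in force)

lemma dyadic_interval_eq:
  "dyadic_interval j k = {real k * dyadic_length j <.. (real k + 1) * dyadic_length j}"
  by (simp add: dyadic_interval_def dyadic_length_def)

lemma dyadic_interval_mem_iff:
  assumes "0 < x" shows "x \<in> dyadic_interval j k \<longleftrightarrow> k = dyadic_index x j"
proof -
  define t where "t = x / dyadic_length j"
  have "0 < t" using assms by (simp add: t_def)
  have "x \<in> dyadic_interval j k \<longleftrightarrow> real k < t \<and> t \<le> real k + 1"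
    by (simp add: dyadic_interval_eq t_def field_simps)
  also have "\<dots> \<longleftrightarrow> \<lceil>t\<rceil> = int k + 1"
    by (simp add: ceiling_eq_iff)
  also have "\<dots> \<longleftrightarrow> k = dyadic_index x j"
    using \<open>0 < t\<close> by (auto simp: dyadic_index_def t_def[symmetric])
  finally show ?thesis .
qed

lemma dyadic_interval_pos: "dyadic_interval j k \<subseteq> {0<..}"
proof
  fix y assume "y \<in> dyadic_interval j k"
  then have "real k * dyadic_length j < y" by (simp add: dyadic_interval_eq)
  moreover have "0 \<le> real k * dyadic_length j" by simp
  ultimately show "y \<in> {0<..}" unfolding greaterThan_iff by linarith
qed

lemma sets_dyadic_interval [measurable]: "dyadic_interval j k \<in> sets lborel"
  by (simp add: dyadic_interval_eq)

lemma emeasure_dyadic_interval: "emeasure lborel (dyadic_interval j k) = ennreal (dyadic_length j)"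
  by (simp add: dyadic_interval_eq algebra_simps)

lemma measure_dyadic_interval: "measure lborel (dyadic_interval j k) = dyadic_length j"
  by (simp add: dyadic_interval_eq algebra_simps)

lemma dyadic_interval_subset_parent: "dyadic_interval (j + 1) k \<subseteq> dyadic_interval j (k div 2)"
proof -
  define l where "l = dyadic_length (j + 1)"
  have len: "dyadic_length j = 2 * l"
    using dyadic_length_succ[of j] by (simp add: l_def)
  have "2 * (k div 2) \<le> k" "k + 1 \<le> 2 * (k div 2) + 2" by presburger+
  then have "real (2 * (k div 2)) * l \<le> real k * l" "real (k + 1) * l \<le> real (2 * (k div 2) + 2) * l"
    using dyadic_length_pos[of "j + 1"] unfolding l_def[symmetric]
    by (simp_all only: of_nat_le_iff mult_le_cancel_right_pos)
  then have "real (k div 2) * (2 * l) \<le> real k * l" "(real k + 1) * l \<le> (real (k div 2) + 1) * (2 * l)"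
    by (simp_all add: algebra_simps)
  then show ?thesis
    unfolding dyadic_interval_eq len l_def[symmetric] by auto
qed

lemma mem_dyadic_cell: "0 < x \<Longrightarrow> x \<in> dyadic_cell x j"
  unfolding dyadic_cell_def using dyadic_interval_mem_iff by blast

lemma dyadic_cell_pos: "dyadic_cell x j \<subseteq> {0<..}"
  unfolding dyadic_cell_def by (rule dyadic_interval_pos)

lemma sets_dyadic_cell [measurable]: "dyadic_cell x j \<in> sets lborel"
  unfolding dyadic_cell_def by (rule sets_dyadic_interval)

lemma emeasure_dyadic_cell: "emeasure lborel (dyadic_cell x j) = ennreal (dyadic_length j)"
  unfolding dyadic_cell_def by (rule emeasure_dyadic_interval)

lemma measure_dyadic_cell: "measure lborel (dyadic_cell x j) = dyadic_length j"
  unfolding dyadic_cell_def by (rule measure_dyadic_interval)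

lemma dyadic_cell_in_family: "dyadic_cell x j \<in> dyadic_family"
  unfolding dyadic_cell_def dyadic_family_def by blast

lemma dyadic_family_mem_eq_cell:
  assumes "J \<in> dyadic_family" "0 < x" "x \<in> J" shows "\<exists>j. J = dyadic_cell x j"
proof -
  obtain j k where J: "J = dyadic_interval j k" using assms(1) unfolding dyadic_family_def by blast
  then have "k = dyadic_index x j" using assms(3) dyadic_interval_mem_iff[OF assms(2)] by blast
  then show ?thesis using J unfolding dyadic_cell_def by blast
qed

lemma dyadic_cell_succ_subset:
  assumes "0 < x" shows "dyadic_cell x (j + 1) \<subseteq> dyadic_cell x j"
proof -
  have "x \<in> dyadic_interval j (dyadic_index x (j + 1) div 2)"
    using dyadic_interval_subset_parent mem_dyadic_cell[OF assms] unfolding dyadic_cell_def by blast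
  then have "dyadic_index x (j + 1) div 2 = dyadic_index x j"
    using dyadic_interval_mem_iff[OF assms] by blast
  then show ?thesis
    using dyadic_interval_subset_parent unfolding dyadic_cell_def by metis
qed

lemma dyadic_cell_antimono:
  assumes "0 < x" "i \<le> j" shows "dyadic_cell x j \<subseteq> dyadic_cell x i"
  using assms(2)
proof (induction j rule: int_ge_induct)
  case (step j)
  then show ?case using dyadic_cell_succ_subset[OF assms(1), of j] by blast
qed simp

lemma dyadic_cell_diameter:
  assumes "y \<in> dyadic_cell x j" "0 < x" shows "\<bar>x - y\<bar> < dyadic_length j"
  using assms mem_dyadic_cell[OF assms(2), of j]
  by (auto simp: dyadic_cell_def dyadic_interval_eq algebra_simps)

lemma exists_dyadic_cell_mem:
  assumes "0 < x" "0 < y" shows "\<exists>j. y \<in> dyadic_cell x j"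
proof -
  obtain n where n: "max x y < 2 ^ n" using real_arch_pow[of 2 "max x y"] by auto
  have "dyadic_length (0 - int n) = 2 ^ n"
    unfolding dyadic_length_diff_nat by (simp add: dyadic_length_def)
  then have "x \<in> dyadic_interval (- int n) 0" "y \<in> dyadic_interval (- int n) 0"
    using n assms by (auto simp: dyadic_interval_eq)
  then show ?thesis
    using dyadic_interval_mem_iff[OF assms(1)] unfolding dyadic_cell_def by metis
qed

lemma exists_dyadic_cell_not_mem:
  assumes "0 < x" "y \<noteq> x" shows "\<exists>j. y \<notin> dyadic_cell x j"
proof -
  obtain j where "dyadic_length j < \<bar>x - y\<bar>"
    using exists_dyadic_length_less[of "\<bar>x - y\<bar>"] assms(2) by auto
  then have "y \<notin> dyadic_cell x j" using dyadic_cell_diameter[OF _ assms(1), of y j] by linarith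
  then show ?thesis ..
qed

lemma exists_dyadic_annulus:
  assumes "0 < x" "0 < y" "y \<noteq> x" shows "\<exists>j. y \<in> dyadic_annulus x j"
proof -
  have "\<exists>j. y \<in> dyadic_annulus x j" if "y \<in> dyadic_cell x i" "y \<notin> dyadic_cell x (i + int n)" for i n
    using that
  proof (induction n arbitrary: i)
    case (Suc n)
    show ?case
    proof (cases "y \<in> dyadic_cell x (i + 1)")
      case True
      moreover have "i + int (Suc n) = i + 1 + int n" by simp
      ultimately show ?thesis using Suc by metis
    next
      case False
      then show ?thesis using Suc.prems(1) unfolding dyadic_annulus_def by blast
    qed
  qed simp
  moreover obtain i where i: "y \<in> dyadic_cell x i" using exists_dyadic_cell_mem assms by blast
  moreover obtain j where j: "y \<notin> dyadic_cell x j" using exists_dyadic_cell_not_mem assms by blast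
  moreover have "i \<le> j" using i j dyadic_cell_antimono[OF assms(1), of j i] by (meson nle_le subsetD)
  ultimately show ?thesis by (metis zle_iff_zadd)
qed

lemma dyadic_cell_mem_iff:
  assumes "0 < x" "y \<in> dyadic_annulus x j" shows "y \<in> dyadic_cell x i \<longleftrightarrow> i \<le> j"
proof
  show "i \<le> j" if "y \<in> dyadic_cell x i"
  proof (rule ccontr)
    assume "\<not> i \<le> j"
    then have "dyadic_cell x i \<subseteq> dyadic_cell x (j + 1)" by (intro dyadic_cell_antimono[OF assms(1)]) simp
    then show False using assms(2) that by (auto simp: dyadic_annulus_def)
  qed
  show "y \<in> dyadic_cell x i" if "i \<le> j"
    using assms(2) dyadic_cell_antimono[OF assms(1) that] by (auto simp: dyadic_annulus_def)
qed

lemma dyadic_annulus_mem_iff: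
  assumes "0 < x" "y \<in> dyadic_annulus x j" shows "y \<in> dyadic_annulus x i \<longleftrightarrow> i = j"
  using dyadic_cell_mem_iff[OF assms, of i] dyadic_cell_mem_iff[OF assms, of "i + 1"]
  by (auto simp: dyadic_annulus_def)

lemma dyadic_dist_eq_Inf:
  assumes "0 < x" shows "dyadic_dist x y = Inf {dyadic_length j | j. y \<in> dyadic_cell x j}"
proof -
  have "{measure lborel I | I. I \<in> dyadic_family \<and> x \<in> I \<and> y \<in> I} = {dyadic_length j | j. y \<in> dyadic_cell x j}"
  proof (intro set_eqI iffI)
    fix t assume "t \<in> {measure lborel I | I. I \<in> dyadic_family \<and> x \<in> I \<and> y \<in> I}"
    then obtain I where I: "t = measure lborel I" "I \<in> dyadic_family" "x \<in> I" "y \<in> I" by blast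
    then obtain j where "I = dyadic_cell x j" using dyadic_family_mem_eq_cell assms by blast
    then show "t \<in> {dyadic_length j | j. y \<in> dyadic_cell x j}" using I by (auto simp: measure_dyadic_cell)
  next
    fix t assume "t \<in> {dyadic_length j | j. y \<in> dyadic_cell x j}"
    then obtain j where "t = dyadic_length j" "y \<in> dyadic_cell x j" by blast
    then show "t \<in> {measure lborel I | I. I \<in> dyadic_family \<and> x \<in> I \<and> y \<in> I}"
      using dyadic_cell_in_family mem_dyadic_cell[OF assms]
      by (intro CollectI exI[of _ "dyadic_cell x j"]) (simp add: measure_dyadic_cell)
  qed
  then show ?thesis by (simp add: dyadic_dist_def)
qed

lemma dyadic_dist_annulus:
  assumes "0 < x" "y \<in> dyadic_annulus x j" shows "dyadic_dist x y = dyadic_length j"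
proof -
  have "{dyadic_length i | i. y \<in> dyadic_cell x i} = {dyadic_length i | i. i \<le> j}"
    using dyadic_cell_mem_iff[OF assms] by simp
  moreover have "Inf {dyadic_length i | i. i \<le> j} = dyadic_length j"
    by (rule cInf_eq_minimum) (auto intro: dyadic_length_antimono)
  ultimately show ?thesis by (simp add: dyadic_dist_eq_Inf[OF assms(1)])
qed

lemma dyadic_dist_self:
  assumes "0 < x" shows "dyadic_dist x x = 0"
proof -
  have dist: "dyadic_dist x x = Inf (range dyadic_length)"
    using mem_dyadic_cell[OF assms] by (simp add: dyadic_dist_eq_Inf[OF assms] full_SetCompr_eq)
  have "Inf (range dyadic_length) \<le> 0 + e" if e: "0 < e" for e
  proof -
    obtain j where "dyadic_length j < e" using exists_dyadic_length_less[OF e] by blast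
    moreover have "bdd_below (range dyadic_length)"
      by (rule bdd_belowI[of _ 0]) (auto intro: less_imp_le)
    then have "Inf (range dyadic_length) \<le> dyadic_length j" by (rule cINF_lower) simp
    ultimately show ?thesis by simp
  qed
  then have "Inf (range dyadic_length) \<le> 0" by (rule field_le_epsilon)
  moreover have "0 \<le> Inf (range dyadic_length)" by (rule cINF_greatest) (auto intro: less_imp_le)
  ultimately show ?thesis using dist by simp
qed

lemma dyadic_dist_nonneg:
  assumes "0 < x" "0 < y" shows "0 \<le> dyadic_dist x y"
proof (cases "y = x")
  case False
  then obtain j where "y \<in> dyadic_annulus x j" using exists_dyadic_annulus[OF assms] by blast
  then show ?thesis using dyadic_dist_annulus[OF assms(1)] by simp
qed (simp add: dyadic_dist_self[OF assms(1)])

lemma dyadic_ball_eq_cell: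
  assumes "0 < x" "dyadic_length i < r" "r \<le> 2 * dyadic_length i"
  shows "dyadic_ball x r = dyadic_cell x i"
proof (rule set_eqI)
  fix y
  consider "y \<le> 0" | "y = x" | j where "0 < y" "y \<noteq> x" "y \<in> dyadic_annulus x j"
    using exists_dyadic_annulus[OF assms(1)] by (meson not_le)
  then show "y \<in> dyadic_ball x r \<longleftrightarrow> y \<in> dyadic_cell x i"
  proof cases
    case 1
    then show ?thesis using dyadic_cell_pos by (force simp: dyadic_ball_def)
  next
    case 2
    have "0 < r" using assms(2) dyadic_length_pos[of i] by linarith
    then show ?thesis using 2 assms(1) mem_dyadic_cell dyadic_dist_self by (simp add: dyadic_ball_def)
  next
    case 3
    then show ?thesis
      using dyadic_dist_annulus[OF assms(1)] dyadic_cell_mem_iff[OF assms(1)]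
        dyadic_length_less_iff[OF assms(2,3)] by (simp add: dyadic_ball_def)
  qed
qed

lemma sets_dyadic_annulus [measurable]: "dyadic_annulus x j \<in> sets lborel"
  unfolding dyadic_annulus_def by measurable

lemma emeasure_dyadic_annulus:
  assumes "0 < x" shows "emeasure lborel (dyadic_annulus x j) = ennreal (dyadic_length j / 2)"
proof -
  have "emeasure lborel (dyadic_annulus x j) = ennreal (dyadic_length j) - ennreal (dyadic_length j / 2)"
    unfolding dyadic_annulus_def using dyadic_cell_succ_subset[OF assms] sets_dyadic_cell[of x]
    by (subst emeasure_Diff) (simp_all add: emeasure_dyadic_cell dyadic_length_succ)
  also have "\<dots> = ennreal (dyadic_length j / 2)"
    by (subst ennreal_minus) simp_all
  finally show ?thesis .
qed

lemma nn_integral_dyadic_annuli: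
  assumes "0 < x"
    and "\<And>y. ennreal (f y) * indicator A y = (\<Sum>m. ennreal (c m) * indicator (dyadic_annulus x (g m)) y)"
  shows "(\<integral>\<^sup>+ y \<in> A. ennreal (f y) \<partial>lborel) = (\<Sum>m. ennreal (c m) * ennreal (dyadic_length (g m) / 2))"
proof -
  have "(\<integral>\<^sup>+ y \<in> A. ennreal (f y) \<partial>lborel)
      = (\<Sum>m. \<integral>\<^sup>+ y. ennreal (c m) * indicator (dyadic_annulus x (g m)) y \<partial>lborel)"
    unfolding assms(2) by (rule nn_integral_suminf) simp
  also have "\<dots> = (\<Sum>m. ennreal (c m) * ennreal (dyadic_length (g m) / 2))"
    by (simp only: nn_integral_cmult_indicator sets_dyadic_annulus emeasure_dyadic_annulus[OF assms(1)])
  finally show ?thesis .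
qed

lemma suminf_indicator_dyadic_annuli:
  fixes c :: "nat \<Rightarrow> ennreal"
  assumes "0 < x" "inj g" "y \<in> dyadic_annulus x (g k)"
  shows "(\<Sum>m. c m * indicator (dyadic_annulus x (g m)) y) = c k"
proof -
  have "c m * indicator (dyadic_annulus x (g m)) y = 0" if "m \<noteq> k" for m
    using dyadic_annulus_mem_iff[OF assms(1,3)] inj_eq[OF assms(2)] that by simp
  then show ?thesis
    using suminf_finite[of "{k}" "\<lambda>m. c m * indicator (dyadic_annulus x (g m)) y"] assms(3) by simp
qed

lemma nn_integral_dyadic_cell_dist:
  assumes "0 < x" "h 0 \<le> 0"
  shows "(\<integral>\<^sup>+ y \<in> dyadic_cell x j. ennreal (h (dyadic_dist x y)) \<partial>lborel)
       = (\<Sum>m. ennreal (h (dyadic_length (j + int m))) * ennreal (dyadic_length (j + int m) / 2))"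
proof (rule nn_integral_dyadic_annuli[OF assms(1)])
  fix y
  show "ennreal (h (dyadic_dist x y)) * indicator (dyadic_cell x j) y
      = (\<Sum>m. ennreal (h (dyadic_length (j + int m))) * indicator (dyadic_annulus x (j + int m)) y)"
  proof (cases "\<exists>k. y \<in> dyadic_annulus x (j + int k)")
    case True
    then obtain k where k: "y \<in> dyadic_annulus x (j + int k)" by blast
    then have "y \<in> dyadic_cell x j" using dyadic_cell_mem_iff[OF assms(1) k, of j] by simp
    then show ?thesis
      using suminf_indicator_dyadic_annuli[where g = "\<lambda>m. j + int m", OF assms(1) _ k] dyadic_dist_annulus[OF assms(1) k]
      by (simp add: inj_on_def)
  next
    case False
    have "y \<notin> dyadic_cell x j \<or> y = x"
    proof (rule ccontr)
      assume "\<not> (y \<notin> dyadic_cell x j \<or> y = x)"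
      then have y: "y \<in> dyadic_cell x j" "y \<noteq> x" by auto
      then obtain i where i: "y \<in> dyadic_annulus x i"
        using exists_dyadic_annulus[OF assms(1)] dyadic_cell_pos by blast
      then have "i = j + int (nat (i - j))" using dyadic_cell_mem_iff[OF assms(1) i, of j] y by simp
      then show False using False i by metis
    qed
    then show ?thesis
      using False dyadic_dist_self[OF assms(1)] ennreal_neg[OF assms(2)] by auto
  qed
qed

lemma nn_integral_outside_dyadic_cell_dist:
  assumes "0 < x"
  shows "(\<integral>\<^sup>+ y \<in> {0<..} - dyadic_cell x j. ennreal (h (dyadic_dist x y)) \<partial>lborel)
       = (\<Sum>m. ennreal (h (dyadic_length (j - int (Suc m)))) * ennreal (dyadic_length (j - int (Suc m)) / 2))"
proof (rule nn_integral_dyadic_annuli[OF assms(1)])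
  fix y
  show "ennreal (h (dyadic_dist x y)) * indicator ({0<..} - dyadic_cell x j) y
      = (\<Sum>m. ennreal (h (dyadic_length (j - int (Suc m)))) * indicator (dyadic_annulus x (j - int (Suc m))) y)"
  proof (cases "\<exists>k. y \<in> dyadic_annulus x (j - int (Suc k))")
    case True
    then obtain k where k: "y \<in> dyadic_annulus x (j - int (Suc k))" by blast
    then have "y \<in> {0<..} - dyadic_cell x j"
      using dyadic_cell_mem_iff[OF assms(1) k, of j] dyadic_cell_pos by (auto simp: dyadic_annulus_def)
    then show ?thesis
      using suminf_indicator_dyadic_annuli[where g = "\<lambda>m. j - int (Suc m)", OF assms(1) _ k] dyadic_dist_annulus[OF assms(1) k]
      by (simp add: inj_on_def)
  next
    case False
    have "y \<notin> {0<..} - dyadic_cell x j"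
    proof
      assume y: "y \<in> {0<..} - dyadic_cell x j"
      then obtain i where i: "y \<in> dyadic_annulus x i"
        using exists_dyadic_annulus[OF assms(1)] mem_dyadic_cell[OF assms(1)] by blast
      then have "i = j - int (Suc (nat (j - i - 1)))" using dyadic_cell_mem_iff[OF assms(1) i, of j] y by simp
      then show False using False i by metis
    qed
    then show ?thesis using False by simp
  qed
qed

lemma suminf_ennreal_geometric:
  fixes c q :: real
  assumes "0 \<le> c" "0 \<le> q" "q < 1"
  shows "(\<Sum>m. ennreal (c * q ^ m)) = ennreal (c / (1 - q))"
proof (rule suminf_ennreal_eq)
  show "(\<lambda>m. c * q ^ m) sums (c / (1 - q))"
    using sums_mult[OF geometric_sums[of q], of c] assms by simp
qed (use assms in simp)

lemma suminf_ennreal_geometric_infinite: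
  fixes c q :: real
  assumes "0 < c" "1 \<le> q"
  shows "(\<Sum>m. ennreal (c * q ^ m)) = \<infinity>"
proof -
  have "(\<Sum>m. ennreal (c * q ^ m)) = top"
    using assms by (intro summable_iff_suminf_neq_top) auto
  then show ?thesis by simp
qed

lemma ennreal_inverse_powr_mult_half:
  fixes t p :: real
  assumes "0 < t"
  shows "ennreal (1 / t powr p) * ennreal (t / 2) = ennreal (t powr (1 - p) / 2)"
  using assms by (simp add: ennreal_mult[symmetric] powr_diff)

lemma powr_dyadic_length_add_nat:
  "dyadic_length (j + int m) powr a = dyadic_length j powr a * (2 powr (- a)) ^ m"
  unfolding dyadic_length_def by (simp add: powr_powr powr_power powr_add[symmetric] algebra_simps)

lemma powr_dyadic_length_diff_nat:
  "dyadic_length (j - int m) powr a = dyadic_length j powr a * (2 powr a) ^ m"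
  unfolding dyadic_length_def by (simp add: powr_powr powr_power powr_add[symmetric] algebra_simps)

lemma nn_integral_dyadic_cell_powr_series:
  assumes "0 < x"
  shows "(\<integral>\<^sup>+ y \<in> dyadic_cell x j. ennreal (1 / dyadic_dist x y powr p) \<partial>lborel)
       = (\<Sum>m. ennreal (dyadic_length j powr (1 - p) / 2 * (2 powr (p - 1)) ^ m))"
proof -
  have "(\<integral>\<^sup>+ y \<in> dyadic_cell x j. ennreal (1 / dyadic_dist x y powr p) \<partial>lborel)
      = (\<Sum>m. ennreal (1 / dyadic_length (j + int m) powr p) * ennreal (dyadic_length (j + int m) / 2))"
    by (rule nn_integral_dyadic_cell_dist[OF assms]) simp
  also have "\<dots> = (\<Sum>m. ennreal (dyadic_length (j + int m) powr (1 - p) / 2))"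
    by (simp only: ennreal_inverse_powr_mult_half dyadic_length_pos)
  also have "\<dots> = (\<Sum>m. ennreal (dyadic_length j powr (1 - p) / 2 * (2 powr (p - 1)) ^ m))"
    by (simp add: powr_dyadic_length_add_nat)
  finally show ?thesis .
qed

lemma nn_integral_outside_dyadic_cell_powr_series:
  assumes "0 < x"
  shows "(\<integral>\<^sup>+ y \<in> {0<..} - dyadic_cell x j. ennreal (1 / dyadic_dist x y powr p) \<partial>lborel)
       = (\<Sum>m. ennreal (dyadic_length j powr (1 - p) / 2 * 2 powr (1 - p) * (2 powr (1 - p)) ^ m))"
proof -
  have "(\<integral>\<^sup>+ y \<in> {0<..} - dyadic_cell x j. ennreal (1 / dyadic_dist x y powr p) \<partial>lborel)
      = (\<Sum>m. ennreal (1 / dyadic_length (j - int (Suc m)) powr p) * ennreal (dyadic_length (j - int (Suc m)) / 2))"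
    by (rule nn_integral_outside_dyadic_cell_dist[OF assms])
  also have "\<dots> = (\<Sum>m. ennreal (dyadic_length (j - int (Suc m)) powr (1 - p) / 2))"
    by (simp only: ennreal_inverse_powr_mult_half dyadic_length_pos)
  also have "\<dots> = (\<Sum>m. ennreal (dyadic_length j powr (1 - p) / 2 * 2 powr (1 - p) * (2 powr (1 - p)) ^ m))"
    by (simp only: powr_dyadic_length_diff_nat) (simp add: mult_ac)
  finally show ?thesis .
qed

lemma nn_integral_dyadic_cell_powr:
  assumes "0 < x" "p < 1"
  shows "(\<integral>\<^sup>+ y \<in> dyadic_cell x j. ennreal (1 / dyadic_dist x y powr p) \<partial>lborel)
       = ennreal (1 / (2 * (1 - 2 powr (p - 1))) * dyadic_length j powr (1 - p))"
proof -
  have "2 powr (p - 1) < 1" using powr_less_cancel_iff[of 2 "p - 1" 0] assms(2) by simp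
  then show ?thesis
    unfolding nn_integral_dyadic_cell_powr_series[OF assms(1)]
    by (subst suminf_ennreal_geometric) simp_all
qed

lemma nn_integral_dyadic_cell_powr_infinite:
  assumes "0 < x" "1 \<le> p"
  shows "(\<integral>\<^sup>+ y \<in> dyadic_cell x j. ennreal (1 / dyadic_dist x y powr p) \<partial>lborel) = \<infinity>"
  unfolding nn_integral_dyadic_cell_powr_series[OF assms(1)]
  using assms(2) by (intro suminf_ennreal_geometric_infinite ge_one_powr_ge_zero) simp_all

lemma nn_integral_outside_dyadic_cell_powr:
  assumes "0 < x" "1 < p"
  shows "(\<integral>\<^sup>+ y \<in> {0<..} - dyadic_cell x j. ennreal (1 / dyadic_dist x y powr p) \<partial>lborel)
       = ennreal (2 powr (1 - p) / (2 * (1 - 2 powr (1 - p))) * dyadic_length j powr (1 - p))"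
proof -
  have "2 powr (1 - p) < 1" using powr_less_cancel_iff[of 2 "1 - p" 0] assms(2) by simp
  then show ?thesis
    unfolding nn_integral_outside_dyadic_cell_powr_series[OF assms(1)]
    by (subst suminf_ennreal_geometric) simp_all
qed

lemma nn_integral_outside_dyadic_cell_powr_infinite:
  assumes "0 < x" "p \<le> 1"
  shows "(\<integral>\<^sup>+ y \<in> {0<..} - dyadic_cell x j. ennreal (1 / dyadic_dist x y powr p) \<partial>lborel) = \<infinity>"
  unfolding nn_integral_outside_dyadic_cell_powr_series[OF assms(1)]
  using assms(2) by (intro suminf_ennreal_geometric_infinite ge_one_powr_ge_zero) simp_all

(* powr 1 is the identity only on nonnegative arguments. *)
lemma set_nn_integral_inverse_dyadic_dist:
  assumes "0 < x" "A \<subseteq> {0<..}"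
  shows "(\<integral>\<^sup>+ y \<in> A. ennreal (1 / dyadic_dist x y) \<partial>lborel)
       = (\<integral>\<^sup>+ y \<in> A. ennreal (1 / dyadic_dist x y powr 1) \<partial>lborel)"
  using assms dyadic_dist_nonneg by (intro set_nn_integral_cong) auto

lemma dyadic_ball_cell:
  assumes "0 < x" "0 < r"
  obtains j where "dyadic_ball x r = dyadic_cell x j" "dyadic_length j < r" "r \<le> 2 * dyadic_length j"
  using exists_dyadic_length_between[OF assms(2)] dyadic_ball_eq_cell[OF assms(1)] by blast

lemma dyadic_ball_largest_cell:
  assumes "0 < x" "0 < r"
  shows "dyadic_ball x r \<in> dyadic_family \<and> x \<in> dyadic_ball x r \<and> measure lborel (dyadic_ball x r) < r \<and>
    (\<forall>J\<in>dyadic_family. x \<in> J \<and> measure lborel J < r \<longrightarrow> J \<subseteq> dyadic_ball x r)"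
proof -
  obtain i where ball: "dyadic_ball x r = dyadic_cell x i"
    and i: "dyadic_length i < r" "r \<le> 2 * dyadic_length i"
    using dyadic_ball_cell[OF assms] .
  have "J \<subseteq> dyadic_cell x i" if J: "J \<in> dyadic_family" "x \<in> J" "measure lborel J < r" for J
  proof -
    obtain j where J_eq: "J = dyadic_cell x j" using dyadic_family_mem_eq_cell[OF J(1) assms(1) J(2)] ..
    then have "i \<le> j" using J(3) dyadic_length_less_iff[OF i] by (simp add: measure_dyadic_cell)
    then show ?thesis unfolding J_eq by (rule dyadic_cell_antimono[OF assms(1)])
  qed
  then show ?thesis
    unfolding ball using dyadic_cell_in_family mem_dyadic_cell[OF assms(1)] i(1)
    by (simp add: measure_dyadic_cell)
qed

lemma measure_dyadic_ball_bounds: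
  assumes "0 < x" "0 < r"
  shows "r / 2 \<le> measure lborel (dyadic_ball x r)" "measure lborel (dyadic_ball x r) < r"
proof -
  obtain j where "dyadic_ball x r = dyadic_cell x j" "dyadic_length j < r" "r \<le> 2 * dyadic_length j"
    using dyadic_ball_cell[OF assms] .
  then show "r / 2 \<le> measure lborel (dyadic_ball x r)" "measure lborel (dyadic_ball x r) < r"
    by (simp_all add: measure_dyadic_cell)
qed

lemma powr_bounds_of_half_le:
  fixes M r a :: real
  assumes "0 < r" "r / 2 \<le> M" "M \<le> r"
  shows "min 1 (2 powr - a) * r powr a \<le> M powr a" "M powr a \<le> max 1 (2 powr - a) * r powr a"
proof -
  have "0 < r / 2" using assms(1) by simp
  have half: "(r / 2) powr a = 2 powr - a * r powr a"
    using assms(1) by (simp add: powr_divide powr_minus_divide)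
  have R: "0 \<le> r powr a" by simp
  have min: "min 1 (2 powr - a) * r powr a \<le> r powr a" "min 1 (2 powr - a) * r powr a \<le> (r / 2) powr a"
    using mult_right_mono[OF min.cobounded1[of 1 "2 powr - a"] R] mult_right_mono[OF min.cobounded2 R]
    by (simp_all add: half)
  have max: "r powr a \<le> max 1 (2 powr - a) * r powr a" "(r / 2) powr a \<le> max 1 (2 powr - a) * r powr a"
    using mult_right_mono[OF max.cobounded1[of 1 "2 powr - a"] R] mult_right_mono[OF max.cobounded2 R]
    by (simp_all add: half)
  consider "(r / 2) powr a \<le> M powr a" "M powr a \<le> r powr a"
    | "r powr a \<le> M powr a" "M powr a \<le> (r / 2) powr a"
  proof (cases "0 \<le> a")
    case True
    show ?thesis
      by (rule that(1); rule powr_mono2) (use True assms \<open>0 < r / 2\<close> in auto)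
  next
    case False
    show ?thesis
      by (rule that(2); rule powr_mono2') (use False assms \<open>0 < r / 2\<close> in auto)
  qed
  then show "min 1 (2 powr - a) * r powr a \<le> M powr a" "M powr a \<le> max 1 (2 powr - a) * r powr a"
    using min max by (cases; linarith)+
qed

lemma ennreal_powr_comparable:
  fixes G :: "real \<Rightarrow> real \<Rightarrow> ennreal" and M :: "real \<Rightarrow> real \<Rightarrow> real"
  assumes "\<And>x r. 0 < x \<Longrightarrow> 0 < r \<Longrightarrow> G x r = ennreal (K * M x r powr a) \<and> r / 2 \<le> M x r \<and> M x r \<le> r"
    and "0 < K"
  shows "\<exists>c C. 0 < c \<and> 0 < C \<and> (\<forall>x>0. \<forall>r>0. ennreal (c * r powr a) \<le> G x r \<and> G x r \<le> ennreal (C * r powr a))"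
proof (intro exI conjI allI impI)
  show "0 < K * min 1 (2 powr - a)" "0 < K * max 1 (2 powr - a)" using assms(2) by auto
  fix x r :: real assume xr: "0 < x" "0 < r"
  note G = assms(1)[OF xr]
  note bounds = powr_bounds_of_half_le[OF xr(2), of "M x r" a]
  show "ennreal (K * min 1 (2 powr - a) * r powr a) \<le> G x r"
    using G mult_left_mono[OF bounds(1), of K] assms(2) by (auto intro!: ennreal_leI simp: mult.assoc)
  show "G x r \<le> ennreal (K * max 1 (2 powr - a) * r powr a)"
    using G mult_left_mono[OF bounds(2), of K] assms(2) by (auto intro!: ennreal_leI simp: mult.assoc)
qed

lemma nn_integral_dyadic_ball_powr:
  assumes "0 < x" "0 < r" "p < 1"
  shows "(\<integral>\<^sup>+ y \<in> dyadic_ball x r. ennreal (1 / dyadic_dist x y powr p) \<partial>lborel)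
       = ennreal (1 / (2 * (1 - 2 powr (p - 1))) * measure lborel (dyadic_ball x r) powr (1 - p))"
proof -
  obtain j where "dyadic_ball x r = dyadic_cell x j" using dyadic_ball_cell[OF assms(1,2)] .
  then show ?thesis using nn_integral_dyadic_cell_powr[OF assms(1,3)] by (simp add: measure_dyadic_cell)
qed

lemma nn_integral_outside_dyadic_ball_powr:
  assumes "0 < x" "0 < r" "1 < p"
  shows "(\<integral>\<^sup>+ y \<in> {0<..} - dyadic_ball x r. ennreal (1 / dyadic_dist x y powr p) \<partial>lborel)
       = ennreal (2 powr (1 - p) / (2 * (1 - 2 powr (1 - p))) * measure lborel (dyadic_ball x r) powr (1 - p))"
proof -
  obtain j where "dyadic_ball x r = dyadic_cell x j" using dyadic_ball_cell[OF assms(1,2)] .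
  then show ?thesis using nn_integral_outside_dyadic_cell_powr[OF assms(1,3)] by (simp add: measure_dyadic_cell)
qed

lemma nn_integral_dyadic_ball_powr_infinite:
  assumes "0 < x" "0 < r" "1 \<le> p"
  shows "(\<integral>\<^sup>+ y \<in> dyadic_ball x r. ennreal (1 / dyadic_dist x y powr p) \<partial>lborel) = \<infinity>"
  using dyadic_ball_cell[OF assms(1,2)] nn_integral_dyadic_cell_powr_infinite[OF assms(1,3)] by metis

lemma nn_integral_outside_dyadic_ball_powr_infinite:
  assumes "0 < x" "0 < r" "p \<le> 1"
  shows "(\<integral>\<^sup>+ y \<in> {0<..} - dyadic_ball x r. ennreal (1 / dyadic_dist x y powr p) \<partial>lborel) = \<infinity>"
  using dyadic_ball_cell[OF assms(1,2)] nn_integral_outside_dyadic_cell_powr_infinite[OF assms(1,3)] by metis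

lemma nn_integral_dyadic_ball_inverse:
  assumes "0 < x" "0 < r"
  shows "(\<integral>\<^sup>+ y \<in> dyadic_ball x r. ennreal (1 / dyadic_dist x y) \<partial>lborel) = \<infinity>"
  using set_nn_integral_inverse_dyadic_dist[OF assms(1), of "dyadic_ball x r"]
    nn_integral_dyadic_ball_powr_infinite[OF assms, of 1]
  by (auto simp: dyadic_ball_def)

lemma nn_integral_outside_dyadic_ball_inverse:
  assumes "0 < x" "0 < r"
  shows "(\<integral>\<^sup>+ y \<in> {0<..} - dyadic_ball x r. ennreal (1 / dyadic_dist x y) \<partial>lborel) = \<infinity>"
  using set_nn_integral_inverse_dyadic_dist[OF assms(1), of "{0<..} - dyadic_ball x r"]
    nn_integral_outside_dyadic_ball_powr_infinite[OF assms, of 1]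
  by auto

lemma nn_integral_dyadic_ball_powr_comparable:
  assumes "p < 1"
  shows "\<exists>c C. 0 < c \<and> 0 < C \<and> (\<forall>x>0. \<forall>r>0.
    ennreal (c * r powr (1 - p)) \<le> (\<integral>\<^sup>+ y \<in> dyadic_ball x r. ennreal (1 / dyadic_dist x y powr p) \<partial>lborel) \<and>
    (\<integral>\<^sup>+ y \<in> dyadic_ball x r. ennreal (1 / dyadic_dist x y powr p) \<partial>lborel) \<le> ennreal (C * r powr (1 - p)))"
proof (rule ennreal_powr_comparable)
  show "0 < 1 / (2 * (1 - 2 powr (p - 1)))"
    using powr_less_cancel_iff[of 2 "p - 1" 0] assms by simp
qed (use nn_integral_dyadic_ball_powr[OF _ _ assms] measure_dyadic_ball_bounds in \<open>auto intro: less_imp_le\<close>)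

lemma nn_integral_outside_dyadic_ball_powr_comparable:
  assumes "1 < p"
  shows "\<exists>c C. 0 < c \<and> 0 < C \<and> (\<forall>x>0. \<forall>r>0.
    ennreal (c * r powr (1 - p)) \<le> (\<integral>\<^sup>+ y \<in> {0<..} - dyadic_ball x r. ennreal (1 / dyadic_dist x y powr p) \<partial>lborel) \<and>
    (\<integral>\<^sup>+ y \<in> {0<..} - dyadic_ball x r. ennreal (1 / dyadic_dist x y powr p) \<partial>lborel) \<le> ennreal (C * r powr (1 - p)))"
proof (rule ennreal_powr_comparable)
  show "0 < 2 powr (1 - p) / (2 * (1 - 2 powr (1 - p)))"
    using powr_less_cancel_iff[of 2 "1 - p" 0] assms by simp
qed (use nn_integral_outside_dyadic_ball_powr[OF _ _ assms] measure_dyadic_ball_bounds in \<open>auto intro: less_imp_le\<close>)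

theorem lemma2p2:
  fixes \<alpha> :: real
  assumes "\<alpha> > 0"
  shows
  "(\<forall>x>0. \<forall>r>0.
      \<comment> \<open>(a)\<close>
      (dyadic_ball x r \<in> dyadic_family \<and> x \<in> dyadic_ball x r \<and> measure lborel (dyadic_ball x r) < r \<and>
       (\<forall>J\<in>dyadic_family. x \<in> J \<and> measure lborel J < r \<longrightarrow> J \<subseteq> dyadic_ball x r)) \<and>
      \<comment> \<open>(b)\<close>
      (\<integral>\<^sup>+ y \<in> dyadic_ball x r. ennreal (1 / dyadic_dist x y powr (1 - \<alpha>)) \<partial>lborel)
         = ennreal (1 / (2 * (1 - 2 powr (- \<alpha>))) * measure lborel (dyadic_ball x r) powr \<alpha>) \<and>
      \<comment> \<open>(c)\<close>
      (\<integral>\<^sup>+ y \<in> dyadic_ball x r. ennreal (1 / dyadic_dist x y powr (1 + \<alpha>)) \<partial>lborel) = \<infinity> \<and>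
      \<comment> \<open>(d)\<close>
      (\<integral>\<^sup>+ y \<in> {0<..} - dyadic_ball x r. ennreal (1 / dyadic_dist x y powr (1 + \<alpha>)) \<partial>lborel)
         = ennreal (2 powr (- \<alpha>) / (2 * (1 - 2 powr (- \<alpha>))) * measure lborel (dyadic_ball x r) powr (- \<alpha>)) \<and>
      \<comment> \<open>(e)\<close>
      (\<integral>\<^sup>+ y \<in> {0<..} - dyadic_ball x r. ennreal (1 / dyadic_dist x y powr (1 - \<alpha>)) \<partial>lborel) = \<infinity> \<and>
      \<comment> \<open>(f)\<close>
      (\<integral>\<^sup>+ y \<in> dyadic_ball x r. ennreal (1 / dyadic_dist x y) \<partial>lborel) = \<infinity> \<and>
      (\<integral>\<^sup>+ y \<in> {0<..} - dyadic_ball x r. ennreal (1 / dyadic_dist x y) \<partial>lborel) = \<infinity>)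
   \<and> (\<exists>c C. 0 < c \<and> 0 < C \<and> (\<forall>x>0. \<forall>r>0.
        ennreal (c * r powr \<alpha>) \<le> (\<integral>\<^sup>+ y \<in> dyadic_ball x r. ennreal (1 / dyadic_dist x y powr (1 - \<alpha>)) \<partial>lborel) \<and>
        (\<integral>\<^sup>+ y \<in> dyadic_ball x r. ennreal (1 / dyadic_dist x y powr (1 - \<alpha>)) \<partial>lborel) \<le> ennreal (C * r powr \<alpha>)))
   \<and> (\<exists>c C. 0 < c \<and> 0 < C \<and> (\<forall>x>0. \<forall>r>0.
        ennreal (c * r powr (- \<alpha>)) \<le> (\<integral>\<^sup>+ y \<in> {0<..} - dyadic_ball x r. ennreal (1 / dyadic_dist x y powr (1 + \<alpha>)) \<partial>lborel) \<and>
        (\<integral>\<^sup>+ y \<in> {0<..} - dyadic_ball x r. ennreal (1 / dyadic_dist x y powr (1 + \<alpha>)) \<partial>lborel) \<le> ennreal (C * r powr (- \<alpha>))))"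
proof -
  have "\<alpha> < 1 + \<alpha>" "1 - \<alpha> < 1" using assms by simp_all
  then show ?thesis
    using dyadic_ball_largest_cell
      nn_integral_dyadic_ball_powr_comparable[of "1 - \<alpha>"]
      nn_integral_outside_dyadic_ball_powr_comparable[of "1 + \<alpha>"]
    by (simp add: nn_integral_dyadic_ball_powr nn_integral_outside_dyadic_ball_powr
        nn_integral_dyadic_ball_powr_infinite nn_integral_outside_dyadic_ball_powr_infinite
        nn_integral_dyadic_ball_inverse nn_integral_outside_dyadic_ball_inverse)
qed

end
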